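(* Let $K$ be a field, $\boldsymbol{\lambda}=(\lambda_1,\dots,\lambda_n)$ a vector of positive integers, and $M(\boldsymbol{\lambda})$ the monoid defined below. Then $I(\boldsymbol{\lambda})\subseteq K[x_1,\dots,x_n]$ is normal if and only if every minimal generator of $M(\boldsymbol{\lambda})$ of type (3) or (4) has $d=1$.
   Context: $I(\boldsymbol{\lambda})$ is the integral closure in $R=K[x_1,\dots,x_n]$ of $(x_1^{\lambda_1},\dots,x_n^{\lambda_n})$; an ideal is normal if all its positive powers are integrally closed. Let $M(\boldsymbol{\lambda})=\{(a_1,\dots,a_n,d)\in\mathbb{N}^{n+1}\mid a_1/\lambda_1+\cdots+a_n/\lambda_n\ge d\}$ (the exponent monoid of the integral closure of the Rees algebra $R[I(\boldsymbol{\lambda})t]$ in $R[t]$). A minimal generator of $M(\boldsymbol{\lambda})$ is a nonzero element that cannot be written as the sum of two nonzero elements of $M(\boldsymbol{\lambda})$. A minimal generator $(a_1,\dots,a_n,d)$ is of type (3) if $a_n=0$, $d>0$ and $a_ia_j>0$ for some $1\le i<j<n$; it is of type (4) if $d>0$ and $a_ia_n>0$ for some $1\le i<n$. *)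

theory Defs
  imports Complex_Main "HOL-Library.Poly_Mapping"
begin

text \<open>K[x_1,...,x_n] is the subring of polynomials only involving the variables 0..n-1.\<close>

type_synonym 'k mpoly = "(nat \<Rightarrow>\<^sub>0 nat) \<Rightarrow>\<^sub>0 'k"

definition polyring :: "nat \<Rightarrow> ('k::field) mpoly set" where
  "polyring n = {p :: 'k mpoly. \<forall>m\<in>Poly_Mapping.keys p. \<forall>i\<in>Poly_Mapping.keys m. i < n}"

definition xpow :: "nat \<Rightarrow> nat \<Rightarrow> ('k::field) mpoly" where
  "xpow i e = Poly_Mapping.single (Poly_Mapping.single i e) 1"

definition ideal_gen :: "'a::comm_ring_1 set \<Rightarrow> 'a set \<Rightarrow> 'a set" where
  "ideal_gen R S = {x. \<exists>F c. finite F \<and> F \<subseteq> S \<and> (\<forall>s\<in>F. c s \<in> R) \<and> x = (\<Sum>s\<in>F. c s * s)}"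

fun ideal_pow :: "'a::comm_ring_1 set \<Rightarrow> 'a set \<Rightarrow> nat \<Rightarrow> 'a set" where
  "ideal_pow R I 0 = R"
| "ideal_pow R I (Suc k) = ideal_gen R {a * b | a b. a \<in> ideal_pow R I k \<and> b \<in> I}"

definition integral_closure :: "'a::comm_ring_1 set \<Rightarrow> 'a set \<Rightarrow> 'a set" where
  "integral_closure R I = {r \<in> R. \<exists>m\<ge>1. \<exists>a. (\<forall>i\<in>{1..m}. a i \<in> ideal_pow R I i) \<and>
      r ^ m + (\<Sum>i=1..m. a i * r ^ (m - i)) = 0}"

definition normal_ideal :: "'a::comm_ring_1 set \<Rightarrow> 'a set \<Rightarrow> bool" where
  "normal_ideal R I \<longleftrightarrow> (\<forall>k\<ge>1. integral_closure R (ideal_pow R I k) = ideal_pow R I k)"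

text \<open>I(lambda): integral closure of (x_1^lambda_1, ..., x_n^lambda_n); variable x_{i+1} is index i.\<close>
definition I_lambda :: "nat \<Rightarrow> (nat \<Rightarrow> nat) \<Rightarrow> ('k::field) mpoly set" where
  "I_lambda n lam = integral_closure (polyring n) (ideal_gen (polyring n) {xpow i (lam i) | i. i < n})"

definition M_lambda :: "nat \<Rightarrow> (nat \<Rightarrow> nat) \<Rightarrow> ((nat \<Rightarrow> nat) \<times> nat) set" where
  "M_lambda n lam = {(a, d). (\<forall>i\<ge>n. a i = 0) \<and> (\<Sum>i<n. real (a i) / real (lam i)) \<ge> real d}"

definition madd :: "(nat \<Rightarrow> nat) \<times> nat \<Rightarrow> (nat \<Rightarrow> nat) \<times> nat \<Rightarrow> (nat \<Rightarrow> nat) \<times> nat" where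
  "madd u v = ((\<lambda>i. fst u i + fst v i), snd u + snd v)"

definition mzero :: "(nat \<Rightarrow> nat) \<times> nat" where
  "mzero = ((\<lambda>i. 0), 0)"

definition min_generator :: "nat \<Rightarrow> (nat \<Rightarrow> nat) \<Rightarrow> (nat \<Rightarrow> nat) \<times> nat \<Rightarrow> bool" where
  "min_generator n lam v \<longleftrightarrow> v \<in> M_lambda n lam \<and> v \<noteq> mzero \<and>
     \<not> (\<exists>u w. u \<in> M_lambda n lam \<and> w \<in> M_lambda n lam \<and> u \<noteq> mzero \<and> w \<noteq> mzero \<and> v = madd u w)"

text \<open>Types (3) and (4); the paper's index n (last variable) is index n - 1 here.\<close>
definition gen_type3 :: "nat \<Rightarrow> (nat \<Rightarrow> nat) \<times> nat \<Rightarrow> bool" where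
  "gen_type3 n v \<longleftrightarrow> fst v (n - 1) = 0 \<and> snd v > 0 \<and>
     (\<exists>i j. i < j \<and> j < n - 1 \<and> fst v i * fst v j > 0)"

definition gen_type4 :: "nat \<Rightarrow> (nat \<Rightarrow> nat) \<times> nat \<Rightarrow> bool" where
  "gen_type4 n v \<longleftrightarrow> snd v > 0 \<and> (\<exists>i < n - 1. fst v i * fst v (n - 1) > 0)"

end

theory Submission
  imports Defs "HOL-Library.Function_Algebras"
begin

text \<open>Weight the monomial x^a by v(a) = a_1/lambda_1 + ... + a_n/lambda_n. Lowest-weight parts
  multiply without cancellation, so an element integral over an ideal whose monomials have weight
  at least k has only monomials of weight at least k. Hence the integral closure of I(lambda)^k
  is spanned by the monomials x^a with (a, k) in M(lambda), whereas every monomial of I(lambda)^k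
  has an exponent splitting as (c, 1) + (a - c, k - 1) in M(lambda). So I(lambda) is normal iff
  every (a, k) in M(lambda) with k > 0 splits in this way, iff every minimal generator has degree
  at most 1. A minimal generator in a single variable x_i has degree 1, since otherwise it splits
  off (lambda_i e_i, 1); only generators of type (3) or (4) can have higher degree.\<close>

section \<open>Ideals of a subring\<close>

definition is_subring :: "'a::comm_ring_1 set \<Rightarrow> bool" where
  "is_subring R \<longleftrightarrow> 0 \<in> R \<and> 1 \<in> R \<and> (\<forall>x\<in>R. \<forall>y\<in>R. x + y \<in> R \<and> x * y \<in> R \<and> - x \<in> R)"

definition is_ideal :: "'a::comm_ring_1 set \<Rightarrow> 'a set \<Rightarrow> bool" where
  "is_ideal R T \<longleftrightarrow> T \<subseteq> R \<and> 0 \<in> T \<and> (\<forall>x\<in>T. \<forall>y\<in>T. x + y \<in> T) \<and> (\<forall>r\<in>R. \<forall>x\<in>T. r * x \<in> T)"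

lemma is_ideal_self: "is_subring R \<Longrightarrow> is_ideal R R"
  unfolding is_subring_def is_ideal_def by blast

lemma ideal_sum_mem:
  assumes "is_ideal R T" "finite F" "\<And>x. x \<in> F \<Longrightarrow> f x \<in> T"
  shows "sum f F \<in> T"
  using assms(2,3) by (induction F rule: finite_induct) (use assms(1) in \<open>auto simp: is_ideal_def\<close>)

lemma ideal_uminus_mem:
  assumes "is_subring R" "is_ideal R T" "x \<in> T"
  shows "- x \<in> T"
proof -
  have "- 1 \<in> R" using assms(1) unfolding is_subring_def by blast
  then have "(- 1) * x \<in> T" using assms(2,3) unfolding is_ideal_def by blast
  then show ?thesis by simp
qed

lemma ideal_gen_minimal:
  assumes "is_ideal R T" "S \<subseteq> T"
  shows "ideal_gen R S \<subseteq> T"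
proof
  fix x assume "x \<in> ideal_gen R S"
  then obtain F c where "finite F" "F \<subseteq> S" "\<forall>s\<in>F. c s \<in> R" "x = (\<Sum>s\<in>F. c s * s)"
    unfolding ideal_gen_def by blast
  with assms show "x \<in> T"
    by (auto intro!: ideal_sum_mem[OF assms(1)] simp: is_ideal_def)
qed

lemma ideal_gen_superset:
  assumes "is_subring R" "s \<in> S"
  shows "s \<in> ideal_gen R S"
  using assms unfolding ideal_gen_def is_subring_def
  by (intro CollectI exI[of _ "{s}"] exI[of _ "\<lambda>_. 1"]) auto

lemma sum_extend_by_zero_coeffs:
  fixes c :: "'a \<Rightarrow> 'a::comm_ring_1"
  assumes "finite G" "F \<subseteq> G"
  shows "(\<Sum>s\<in>F. c s * s) = (\<Sum>s\<in>G. (if s \<in> F then c s else 0) * s)"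
  using assms by (intro sum.mono_neutral_cong_left) auto

lemma is_ideal_ideal_gen:
  assumes R: "is_subring R" and S: "S \<subseteq> R"
  shows "is_ideal R (ideal_gen R S)"
  unfolding is_ideal_def
proof (intro conjI ballI)
  show "ideal_gen R S \<subseteq> R" using ideal_gen_minimal[OF is_ideal_self[OF R] S] .
  show "0 \<in> ideal_gen R S" unfolding ideal_gen_def by (intro CollectI exI[of _ "{}"]) auto
next
  fix x y assume "x \<in> ideal_gen R S" "y \<in> ideal_gen R S"
  then obtain F c G d where F: "finite F" "F \<subseteq> S" "\<forall>s\<in>F. c s \<in> R" "x = (\<Sum>s\<in>F. c s * s)"
    and G: "finite G" "G \<subseteq> S" "\<forall>s\<in>G. d s \<in> R" "y = (\<Sum>s\<in>G. d s * s)"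
    unfolding ideal_gen_def by blast
  let ?e = "\<lambda>s. (if s \<in> F then c s else 0) + (if s \<in> G then d s else 0)"
  have "x + y = (\<Sum>s\<in>F \<union> G. ?e s * s)"
    using F G sum_extend_by_zero_coeffs[of "F \<union> G" F c] sum_extend_by_zero_coeffs[of "F \<union> G" G d]
    by (simp add: sum.distrib distrib_right)
  moreover have "\<forall>s\<in>F \<union> G. ?e s \<in> R" using F G R unfolding is_subring_def by auto
  ultimately show "x + y \<in> ideal_gen R S"
    unfolding ideal_gen_def using F G by (intro CollectI exI[of _ "F \<union> G"] exI[of _ ?e]) auto
next
  fix r x assume r: "r \<in> R" and "x \<in> ideal_gen R S"
  then obtain F c where F: "finite F" "F \<subseteq> S" "\<forall>s\<in>F. c s \<in> R" "x = (\<Sum>s\<in>F. c s * s)"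
    unfolding ideal_gen_def by blast
  have "r * x = (\<Sum>s\<in>F. (r * c s) * s)" using F by (simp add: sum_distrib_left mult.assoc)
  moreover have "\<forall>s\<in>F. r * c s \<in> R" using F r R unfolding is_subring_def by auto
  ultimately show "r * x \<in> ideal_gen R S"
    unfolding ideal_gen_def using F by (intro CollectI exI[of _ F] exI[of _ "\<lambda>s. r * c s"]) auto
qed

lemma is_ideal_ideal_pow:
  assumes "is_subring R" "I \<subseteq> R"
  shows "is_ideal R (ideal_pow R I k)"
proof (induction k)
  case 0 then show ?case using is_ideal_self[OF assms(1)] by simp
next
  case (Suc k)
  have "{a * b | a b. a \<in> ideal_pow R I k \<and> b \<in> I} \<subseteq> R"
    using Suc assms unfolding is_ideal_def is_subring_def by blast
  then show ?case using is_ideal_ideal_gen[OF assms(1)] by simp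
qed

lemma ideal_pow_Suc_mult_mem:
  assumes "is_subring R" "a \<in> ideal_pow R I k" "b \<in> I"
  shows "a * b \<in> ideal_pow R I (Suc k)"
  using assms by (auto intro!: ideal_gen_superset)

lemma ideal_pow_Suc_subset:
  assumes "is_ideal R T" "\<And>a b. a \<in> ideal_pow R I k \<Longrightarrow> b \<in> I \<Longrightarrow> a * b \<in> T"
  shows "ideal_pow R I (Suc k) \<subseteq> T"
  unfolding ideal_pow.simps by (rule ideal_gen_minimal[OF assms(1)]) (use assms(2) in blast)

lemma power_mem_ideal_pow:
  assumes "is_subring R" "x \<in> I"
  shows "x ^ k \<in> ideal_pow R I k"
proof (induction k)
  case 0 then show ?case using assms(1) by (simp add: is_subring_def)
next
  case (Suc k) then show ?case using ideal_pow_Suc_mult_mem[OF assms(1) Suc assms(2)] by (simp add: mult.commute)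
qed

lemma integral_closure_if_power_mem:
  assumes R: "is_subring R" and J: "J \<subseteq> R" and r: "r \<in> R" and m: "m \<ge> 1"
    and rm: "r ^ m \<in> ideal_pow R J m"
  shows "r \<in> integral_closure R J"
proof -
  define a where "a i = (if i = m then - (r ^ m) else 0)" for i
  have "a i \<in> ideal_pow R J i" for i
    using ideal_uminus_mem[OF R is_ideal_ideal_pow[OF R J] rm] is_ideal_ideal_pow[OF R J, of i]
    unfolding a_def is_ideal_def by auto
  moreover have "(\<Sum>i=1..m. a i * r ^ (m - i)) = (\<Sum>i=1..m. if i = m then - (r ^ m) else 0)"
    by (rule sum.cong) (auto simp: a_def)
  then have "(\<Sum>i=1..m. a i * r ^ (m - i)) = - (r ^ m)" using m by simp
  ultimately show ?thesis unfolding integral_closure_def using r m by force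
qed

lemma ideal_subset_integral_closure:
  assumes "is_subring R" "J \<subseteq> R"
  shows "J \<subseteq> integral_closure R J"
proof
  fix r assume r: "r \<in> J"
  have "r ^ 1 \<in> ideal_pow R J 1" using power_mem_ideal_pow[OF assms(1) r] .
  then show "r \<in> integral_closure R J"
    using integral_closure_if_power_mem[OF assms] r assms(2) by blast
qed

section \<open>Monomials\<close>

definition supp_below :: "nat \<Rightarrow> (nat \<Rightarrow> nat) \<Rightarrow> bool" where
  "supp_below n a \<longleftrightarrow> (\<forall>i\<ge>n. a i = 0)"

definition monomial :: "(nat \<Rightarrow> nat) \<Rightarrow> ('k::field) mpoly" where
  "monomial a = Poly_Mapping.single (Abs_poly_mapping a) 1"

definition monomial_span :: "nat \<Rightarrow> ((nat \<Rightarrow> nat) \<Rightarrow> bool) \<Rightarrow> ('k::field) mpoly set" where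
  "monomial_span n P = {f \<in> polyring n. \<forall>m\<in>Poly_Mapping.keys f. P (Poly_Mapping.lookup m)}"

lemma supp_below_add: "supp_below n a \<Longrightarrow> supp_below n b \<Longrightarrow> supp_below n (a + b)"
  unfolding supp_below_def by simp

lemma mem_polyring_iff:
  "f \<in> polyring n \<longleftrightarrow> (\<forall>m\<in>Poly_Mapping.keys f. supp_below n (Poly_Mapping.lookup m))"
proof -
  have "(\<forall>i\<in>Poly_Mapping.keys m. i < n) \<longleftrightarrow> supp_below n (Poly_Mapping.lookup m)" for m :: "nat \<Rightarrow>\<^sub>0 nat"
    unfolding supp_below_def by (meson in_keys_iff not_le)
  then show ?thesis unfolding polyring_def by blast
qed

lemma mem_monomial_span_iff:
  "f \<in> monomial_span n P \<longleftrightarrow>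
    (\<forall>m\<in>Poly_Mapping.keys f. supp_below n (Poly_Mapping.lookup m) \<and> P (Poly_Mapping.lookup m))"
  unfolding monomial_span_def mem_polyring_iff by blast

lemma lookup_Abs_poly_mapping_supp_below:
  assumes "supp_below n a"
  shows "Poly_Mapping.lookup (Abs_poly_mapping a) = a"
proof -
  have "{i. a i \<noteq> 0} \<subseteq> {..<n}" using assms unfolding supp_below_def by (auto simp: not_less[symmetric])
  then show ?thesis by (simp add: finite_subset)
qed

lemma lookup_plus_fun: "Poly_Mapping.lookup (x + y) = Poly_Mapping.lookup x + Poly_Mapping.lookup y"
  by (simp add: fun_eq_iff lookup_add)

lemma monomial_span_True: "monomial_span n (\<lambda>_. True) = polyring n"
  unfolding monomial_span_def by simp

lemma monomial_span_mult:
  assumes f: "f \<in> monomial_span n P" and g: "g \<in> monomial_span n Q"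
    and PQ: "\<And>a b. supp_below n a \<Longrightarrow> supp_below n b \<Longrightarrow> P a \<Longrightarrow> Q b \<Longrightarrow> S (a + b)"
  shows "f * g \<in> monomial_span n S"
  unfolding mem_monomial_span_iff
proof
  fix m assume "m \<in> Poly_Mapping.keys (f * g)"
  then obtain x y where m: "m = x + y" and "x \<in> Poly_Mapping.keys f" "y \<in> Poly_Mapping.keys g"
    using keys_mult[of f g] by blast
  then show "supp_below n (Poly_Mapping.lookup m) \<and> S (Poly_Mapping.lookup m)"
    using f g PQ supp_below_add unfolding m lookup_plus_fun mem_monomial_span_iff by blast
qed

lemma monomial_span_add:
  "f \<in> monomial_span n P \<Longrightarrow> g \<in> monomial_span n P \<Longrightarrow> f + g \<in> monomial_span n P"
  unfolding mem_monomial_span_iff using keys_add[of f g] by blast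

lemma is_subring_polyring: "is_subring (polyring n :: ('k::field) mpoly set)"
  unfolding is_subring_def
proof (intro conjI ballI)
  fix x y :: "'k mpoly" assume "x \<in> polyring n" "y \<in> polyring n"
  then show "x + y \<in> polyring n" "x * y \<in> polyring n" "- x \<in> polyring n"
    using monomial_span_add[of x n "\<lambda>_. True" y]
      monomial_span_mult[of x n "\<lambda>_. True" y "\<lambda>_. True" "\<lambda>_. True"]
    by (simp_all add: monomial_span_True) (simp add: polyring_def)
qed (simp_all add: polyring_def)

lemma is_ideal_monomial_span:
  assumes "\<And>a b. supp_below n a \<Longrightarrow> P b \<Longrightarrow> P (a + b)"
  shows "is_ideal (polyring n) (monomial_span n P :: ('k::field) mpoly set)"
  unfolding is_ideal_def
proof (intro conjI ballI)
  fix r x :: "'k mpoly" assume "r \<in> polyring n" "x \<in> monomial_span n P"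
  then show "r * x \<in> monomial_span n P"
    using assms by (intro monomial_span_mult[of r n "\<lambda>_. True" x P]) (simp_all add: monomial_span_True)
qed (simp_all add: monomial_span_add, auto simp: monomial_span_def polyring_def)

lemma keys_monomial: "Poly_Mapping.keys (monomial a :: ('k::field) mpoly) = {Abs_poly_mapping a}"
  unfolding monomial_def by simp

lemma monomial_lookup: "monomial (Poly_Mapping.lookup m) = Poly_Mapping.single m 1"
  unfolding monomial_def by simp

lemma monomial_in_monomial_span_iff:
  assumes a: "supp_below n a"
  shows "monomial a \<in> monomial_span n P \<longleftrightarrow> P a"
  using a by (simp add: mem_monomial_span_iff keys_monomial lookup_Abs_poly_mapping_supp_below[OF a])

lemma monomial_in_polyring: "supp_below n a \<Longrightarrow> monomial a \<in> polyring n"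
  using monomial_in_monomial_span_iff[of n a "\<lambda>_. True"] by (simp add: monomial_span_True)

lemma monomial_mult:
  assumes "supp_below n a" "supp_below n b"
  shows "monomial a * monomial b = monomial (a + b)"
proof -
  have "Abs_poly_mapping a + Abs_poly_mapping b = Abs_poly_mapping (a + b)"
    by (rule poly_mapping_eqI)
       (simp add: lookup_add lookup_Abs_poly_mapping_supp_below[OF assms(1)]
         lookup_Abs_poly_mapping_supp_below[OF assms(2)]
         lookup_Abs_poly_mapping_supp_below[OF supp_below_add[OF assms]])
  then show ?thesis unfolding monomial_def mult_single by simp
qed

lemma monomial_power:
  assumes "supp_below n a"
  shows "monomial a ^ k = monomial (\<lambda>i. k * a i)"
proof (induction k)
  case 0
  have "Abs_poly_mapping (\<lambda>_. 0 :: nat) = 0" by (rule poly_mapping_eqI) simp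
  then show ?case unfolding monomial_def by simp
next
  case (Suc k)
  have "supp_below n (\<lambda>i. k * a i)" using assms unfolding supp_below_def by simp
  from monomial_mult[OF assms this] show ?case using Suc by (simp add: plus_fun_def)
qed

lemma xpow_eq_monomial: "xpow i e = monomial (0(i := e))"
  unfolding xpow_def monomial_def
  by (rule arg_cong[where f = "\<lambda>x. Poly_Mapping.single x 1"], rule poly_mapping_eqI)
     (simp add: lookup_single when_def)

lemma supp_below_fun_upd_zero: "i < n \<Longrightarrow> supp_below n (0(i := e))"
  unfolding supp_below_def by auto

lemma sum_single_lookup_keys:
  "(\<Sum>m\<in>Poly_Mapping.keys f. Poly_Mapping.single m (Poly_Mapping.lookup f m)) = f" (is "?s = f")
proof (rule poly_mapping_eqI)
  fix k
  have "Poly_Mapping.lookup ?s k = (\<Sum>m\<in>Poly_Mapping.keys f. if m = k then Poly_Mapping.lookup f k else 0)"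
    unfolding lookup_sum by (rule sum.cong) (auto simp: lookup_single when_def)
  also have "\<dots> = Poly_Mapping.lookup f k" by (simp add: in_keys_iff)
  finally show "Poly_Mapping.lookup ?s k = Poly_Mapping.lookup f k" .
qed

lemma polyring_sum_of_terms:
  fixes f :: "('k::field) mpoly"
  assumes T: "is_ideal (polyring n) T" and f: "f \<in> polyring n"
    and terms: "\<And>m. m \<in> Poly_Mapping.keys f \<Longrightarrow> monomial (Poly_Mapping.lookup m) \<in> T"
  shows "f \<in> T"
proof -
  have "Poly_Mapping.single m (Poly_Mapping.lookup f m) \<in> T" if "m \<in> Poly_Mapping.keys f" for m
  proof -
    have "Poly_Mapping.single 0 (Poly_Mapping.lookup f m) \<in> polyring n" unfolding polyring_def by simp
    then have "Poly_Mapping.single 0 (Poly_Mapping.lookup f m) * monomial (Poly_Mapping.lookup m) \<in> T"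
      using T terms[OF that] unfolding is_ideal_def by blast
    then show ?thesis by (simp add: monomial_lookup mult_single)
  qed
  then show ?thesis using ideal_sum_mem[OF T finite_keys] sum_single_lookup_keys[of f] by metis
qed

section \<open>Weighted degree and integral closure\<close>

lemma lookup_mult_Sum_any:
  "Poly_Mapping.lookup (f * g) k = (\<Sum>(a, b). Poly_Mapping.lookup f a * Poly_Mapping.lookup g b when k = a + b)"
  by transfer (simp add: prod_fun_unfold_prod)

lemma keys_mult_lowest_weight:
  fixes f g :: "('k::idom) mpoly" and W :: "(nat \<Rightarrow>\<^sub>0 nat) \<Rightarrow> real"
  assumes W_add: "\<And>x y. W (x + y) = W x + W y"
    and f_ge: "\<forall>b\<in>Poly_Mapping.keys f. s \<le> W b" and f_eq: "\<exists>b\<in>Poly_Mapping.keys f. W b = s"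
    and g_ge: "\<forall>b\<in>Poly_Mapping.keys g. t \<le> W b" and g_eq: "\<exists>b\<in>Poly_Mapping.keys g. W b = t"
  shows "\<exists>c\<in>Poly_Mapping.keys (f * g). W c = s + t"
proof -
  define F where "F = {a \<in> Poly_Mapping.keys f. W a = s}"
  define G where "G = {b \<in> Poly_Mapping.keys g. W b = t}"
  have "finite F" "F \<noteq> {}" "finite G" "G \<noteq> {}"
    using f_eq g_eq unfolding F_def G_def by auto
  \<comment> \<open>Among the monomials of lowest weight take the largest ones in the term order;
    their product cannot be cancelled by any other pair.\<close>
  define a0 where "a0 = Max F"
  define b0 where "b0 = Max G"
  have a0: "a0 \<in> F" "\<And>a. a \<in> F \<Longrightarrow> a \<le> a0" and b0: "b0 \<in> G" "\<And>b. b \<in> G \<Longrightarrow> b \<le> b0"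
    using \<open>finite F\<close> \<open>F \<noteq> {}\<close> \<open>finite G\<close> \<open>G \<noteq> {}\<close> unfolding a0_def b0_def by auto
  have unique: "Poly_Mapping.lookup f a * Poly_Mapping.lookup g b = 0"
    if ab: "a0 + b0 = a + b" "(a, b) \<noteq> (a0, b0)" for a b
  proof (rule ccontr)
    assume "Poly_Mapping.lookup f a * Poly_Mapping.lookup g b \<noteq> 0"
    then have a: "a \<in> Poly_Mapping.keys f" and b: "b \<in> Poly_Mapping.keys g" by (auto simp: in_keys_iff)
    have "W a + W b = s + t" using W_add[of a0 b0] W_add[of a b] a0(1) b0(1) ab(1)
      unfolding F_def G_def by simp
    then have "a \<in> F" "b \<in> G" using a b f_ge g_ge unfolding F_def G_def by fastforce+
    then have le: "a \<le> a0" "b \<le> b0" using a0(2) b0(2) by auto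
    with ab(2) have "a < a0 \<or> b < b0" by auto
    then have "a + b < a0 + b0" using le by (auto intro: add_less_le_mono add_le_less_mono)
    then show False using ab(1) by simp
  qed
  have "Poly_Mapping.lookup (f * g) (a0 + b0)
      = (\<Sum>ab. Poly_Mapping.lookup f a0 * Poly_Mapping.lookup g b0 when ab = (a0, b0))"
    unfolding lookup_mult_Sum_any
  proof (rule Sum_any.cong)
    fix ab :: "(nat \<Rightarrow>\<^sub>0 nat) \<times> (nat \<Rightarrow>\<^sub>0 nat)"
    show "(case ab of (a, b) \<Rightarrow> Poly_Mapping.lookup f a * Poly_Mapping.lookup g b when a0 + b0 = a + b)
        = (Poly_Mapping.lookup f a0 * Poly_Mapping.lookup g b0 when ab = (a0, b0))"
      using unique by (cases ab) (auto simp: when_def)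
  qed
  also have "\<dots> \<noteq> 0" using a0(1) b0(1) unfolding F_def G_def by (simp add: in_keys_iff)
  finally have "a0 + b0 \<in> Poly_Mapping.keys (f * g)" by (simp add: in_keys_iff)
  moreover have "W (a0 + b0) = s + t" using W_add a0(1) b0(1) unfolding F_def G_def by simp
  ultimately show ?thesis by blast
qed

lemma keys_power_lowest_weight:
  fixes r :: "('k::idom) mpoly" and W :: "(nat \<Rightarrow>\<^sub>0 nat) \<Rightarrow> real"
  assumes W_add: "\<And>x y. W (x + y) = W x + W y"
    and r_ge: "\<forall>b\<in>Poly_Mapping.keys r. w \<le> W b" and r_eq: "\<exists>b\<in>Poly_Mapping.keys r. W b = w"
  shows "(\<forall>b\<in>Poly_Mapping.keys (r ^ j). j * w \<le> W b) \<and> (\<exists>b\<in>Poly_Mapping.keys (r ^ j). W b = j * w)"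
proof (induction j)
  case 0
  have "W 0 = 0" using W_add[of 0 0] by simp
  then show ?case by simp
next
  case (Suc j)
  have "j * w + w \<le> W b" if b: "b \<in> Poly_Mapping.keys (r ^ j * r)" for b
  proof -
    obtain x y where "b = x + y" "x \<in> Poly_Mapping.keys (r ^ j)" "y \<in> Poly_Mapping.keys r"
      using b keys_mult[of "r ^ j" r] by blast
    then show ?thesis using Suc r_ge W_add by (auto intro: add_mono)
  qed
  moreover have "\<exists>b\<in>Poly_Mapping.keys (r ^ j * r). W b = j * w + w"
    using keys_mult_lowest_weight[OF W_add _ _ r_ge r_eq] Suc by blast
  moreover have "real (Suc j) * w = j * w + w" by (simp add: algebra_simps)
  ultimately show ?case by (simp add: mult.commute)
qed

lemma integral_equation_weight_bound:
  fixes r :: "('k::idom) mpoly" and W :: "(nat \<Rightarrow>\<^sub>0 nat) \<Rightarrow> real"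
  assumes W_add: "\<And>x y. W (x + y) = W x + W y"
    and m: "m \<ge> 1"
    and a: "\<And>i b. i \<in> {1..m} \<Longrightarrow> b \<in> Poly_Mapping.keys (a i) \<Longrightarrow> real i * t \<le> W b"
    and eq: "r ^ m + (\<Sum>i=1..m. a i * r ^ (m - i)) = 0"
  shows "\<forall>b\<in>Poly_Mapping.keys r. t \<le> W b"
proof (rule ccontr)
  assume "\<not> ?thesis"
  then obtain b0 where b0: "b0 \<in> Poly_Mapping.keys r" "W b0 < t" by force
  define w where "w = Min (W ` Poly_Mapping.keys r)"
  have r_ge: "\<forall>b\<in>Poly_Mapping.keys r. w \<le> W b" unfolding w_def by simp
  have "W ` Poly_Mapping.keys r \<noteq> {}" using b0(1) by blast
  then have "w \<in> W ` Poly_Mapping.keys r" unfolding w_def by (simp add: Min_in)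
  then have r_eq: "\<exists>b\<in>Poly_Mapping.keys r. W b = w" by auto
  have "w \<le> W b0" using r_ge b0(1) by blast
  then have "w < t" using b0(2) by linarith
  obtain c where c: "c \<in> Poly_Mapping.keys (r ^ m)" "W c = m * w"
    using keys_power_lowest_weight[OF W_add r_ge r_eq, of m] by blast
  \<comment> \<open>Every other term of the equation only involves monomials of weight > m w.\<close>
  have "m * w < W b" if i: "i \<in> {1..m}" and b: "b \<in> Poly_Mapping.keys (a i * r ^ (m - i))" for i b
  proof -
    obtain x y where xy: "b = x + y" "x \<in> Poly_Mapping.keys (a i)" "y \<in> Poly_Mapping.keys (r ^ (m - i))"
      using b keys_mult[of "a i" "r ^ (m - i)"] by blast
    have "(m - i) * w \<le> W y" using keys_power_lowest_weight[OF W_add r_ge r_eq, of "m - i"] xy(3) by blast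
    moreover have "real i * t \<le> W x" using a[OF i xy(2)] .
    moreover have "real i * w < real i * t" using i \<open>w < t\<close> by (simp add: mult_strict_left_mono)
    moreover have "real m * w = real i * w + real (m - i) * w" using i by (simp add: of_nat_diff algebra_simps)
    ultimately show ?thesis unfolding xy(1) W_add by linarith
  qed
  then have "Poly_Mapping.lookup (a i * r ^ (m - i)) c = 0" if "i \<in> {1..m}" for i
    using c(2) that by (metis in_keys_iff less_irrefl)
  then have "Poly_Mapping.lookup (\<Sum>i=1..m. a i * r ^ (m - i)) c = 0"
    unfolding lookup_sum by (intro sum.neutral) blast
  then have "Poly_Mapping.lookup (r ^ m + (\<Sum>i=1..m. a i * r ^ (m - i))) c \<noteq> 0"
    using c(1) by (simp add: in_keys_iff lookup_add)
  then show False using eq by simp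
qed

definition wdeg :: "nat \<Rightarrow> (nat \<Rightarrow> nat) \<Rightarrow> (nat \<Rightarrow> nat) \<Rightarrow> real" where
  "wdeg n lam a = (\<Sum>i<n. real (a i) / real (lam i))"

lemma wdeg_add: "wdeg n lam (a + b) = wdeg n lam a + wdeg n lam b"
  unfolding wdeg_def by (simp add: sum.distrib add_divide_distrib)

lemma wdeg_nonneg: "0 \<le> wdeg n lam a"
  unfolding wdeg_def by (simp add: sum_nonneg)

lemma wdeg_fun_upd_zero:
  assumes "i < n"
  shows "wdeg n lam (0(i := e)) = real e / real (lam i)"
proof -
  have "wdeg n lam (0(i := e)) = (\<Sum>j<n. if j = i then real e / real (lam i) else 0)"
    unfolding wdeg_def by (rule sum.cong) auto
  then show ?thesis using assms by simp
qed

lemma mem_M_lambda: "(a, d) \<in> M_lambda n lam \<longleftrightarrow> supp_below n a \<and> real d \<le> wdeg n lam a"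
  unfolding M_lambda_def supp_below_def wdeg_def by simp

lemma ideal_pow_subset_wdeg_span:
  assumes J: "J \<subseteq> monomial_span n (\<lambda>a. t \<le> wdeg n lam a)"
  shows "ideal_pow (polyring n) J k \<subseteq> (monomial_span n (\<lambda>a. k * t \<le> wdeg n lam a) :: ('k::field) mpoly set)"
proof (induction k)
  case 0 then show ?case by (simp add: wdeg_nonneg monomial_span_def)
next
  case (Suc k)
  have "is_ideal (polyring n) (monomial_span n (\<lambda>a. Suc k * t \<le> wdeg n lam a) :: 'k mpoly set)"
    by (rule is_ideal_monomial_span) (simp add: wdeg_add add_increasing wdeg_nonneg)
  moreover have "x * y \<in> monomial_span n (\<lambda>a. Suc k * t \<le> wdeg n lam a)"
    if "x \<in> ideal_pow (polyring n) J k" "y \<in> J" for x y :: "'k mpoly"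
    using that Suc J
    by (intro monomial_span_mult[where P = "\<lambda>a. k * t \<le> wdeg n lam a" and Q = "\<lambda>a. t \<le> wdeg n lam a"])
       (auto simp: wdeg_add algebra_simps)
  ultimately show ?case by (rule ideal_pow_Suc_subset)
qed

lemma integral_closure_subset_wdeg_span:
  assumes J: "J \<subseteq> monomial_span n (\<lambda>a. t \<le> wdeg n lam a)"
  shows "integral_closure (polyring n) J \<subseteq> (monomial_span n (\<lambda>a. t \<le> wdeg n lam a) :: ('k::field) mpoly set)"
proof
  fix r :: "'k mpoly" assume "r \<in> integral_closure (polyring n) J"
  then obtain m a where r: "r \<in> polyring n" and m: "m \<ge> 1"
    and a: "\<forall>i\<in>{1..m}. a i \<in> ideal_pow (polyring n) J i"
    and eq: "r ^ m + (\<Sum>i=1..m. a i * r ^ (m - i)) = 0"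
    unfolding integral_closure_def by blast
  have W_add: "wdeg n lam (Poly_Mapping.lookup (x + y)) = wdeg n lam (Poly_Mapping.lookup x) + wdeg n lam (Poly_Mapping.lookup y)"
    for x y :: "nat \<Rightarrow>\<^sub>0 nat" by (simp add: lookup_plus_fun wdeg_add)
  have "real i * t \<le> wdeg n lam (Poly_Mapping.lookup b)"
    if i: "i \<in> {1..m}" and b: "b \<in> Poly_Mapping.keys (a i)" for i b
  proof -
    have "a i \<in> monomial_span n (\<lambda>a. real i * t \<le> wdeg n lam a)"
      using a i ideal_pow_subset_wdeg_span[OF J, of i] by blast
    then show ?thesis using b unfolding mem_monomial_span_iff by blast
  qed
  from integral_equation_weight_bound[where W = "\<lambda>b. wdeg n lam (Poly_Mapping.lookup b)", OF W_add m this eq]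
  have "\<forall>b\<in>Poly_Mapping.keys r. t \<le> wdeg n lam (Poly_Mapping.lookup b)" .
  with r show "r \<in> monomial_span n (\<lambda>a. t \<le> wdeg n lam a)"
    by (simp add: mem_monomial_span_iff mem_polyring_iff)
qed

lemma monomial_in_ideal_pow:
  assumes gen: "\<And>i. i < n \<Longrightarrow> xpow i (t i) \<in> J"
  shows "supp_below n b \<Longrightarrow> k \<le> (\<Sum>i<n. b i div t i) \<Longrightarrow> monomial b \<in> ideal_pow (polyring n) J k"
proof (induction k arbitrary: b)
  case 0 then show ?case by (simp add: monomial_in_polyring)
next
  case (Suc k)
  have "\<exists>i<n. 0 < b i div t i"
  proof (rule ccontr)
    assume "\<not> (\<exists>i<n. 0 < b i div t i)"
    then have "(\<Sum>i<n. b i div t i) = 0" by simp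
    then show False using Suc.prems(2) by simp
  qed
  then obtain i where i: "i < n" "0 < b i div t i" by blast
  then have ti: "0 < t i" "t i \<le> b i" by (auto simp: div_greater_zero_iff)
  define b' where "b' = b(i := b i - t i)"
  have supp: "supp_below n b'" "supp_below n (0(i := t i))"
    using Suc.prems(1) i(1) unfolding b'_def supp_below_def by auto
  have "(\<Sum>j\<in>{..<n} - {i}. b' j div t j) = (\<Sum>j\<in>{..<n} - {i}. b j div t j)"
    by (rule sum.cong) (auto simp: b'_def)
  moreover have "b i div t i = Suc (b' i div t i)" using le_div_geq[OF ti] by (simp add: b'_def)
  ultimately have "(\<Sum>j<n. b j div t j) = Suc (\<Sum>j<n. b' j div t j)"
    using i(1) by (simp add: sum.remove[of "{..<n}" i])
  then have b': "monomial b' \<in> ideal_pow (polyring n) J k" using Suc supp(1) by simp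
  have "b' + 0(i := t i) = b" using ti unfolding b'_def by (auto simp: fun_eq_iff)
  then have eq: "monomial b' * xpow i (t i) = monomial b"
    using monomial_mult[OF supp] by (simp add: xpow_eq_monomial)
  from ideal_pow_Suc_mult_mem[OF is_subring_polyring b' gen[OF i(1)]] show ?case unfolding eq .
qed

lemma monomial_in_integral_closure:
  assumes J: "J \<subseteq> polyring n" and gen: "\<And>i. i < n \<Longrightarrow> xpow i (t i) \<in> J"
    and t: "\<And>i. i < n \<Longrightarrow> 0 < t i" and a: "(a, 1) \<in> M_lambda n t"
  shows "monomial a \<in> integral_closure (polyring n) J"
proof -
  define P where "P = (\<Prod>i<n. t i)"
  have P: "0 < P" unfolding P_def using t by (simp add: prod_pos)
  have supp: "supp_below n a" "supp_below n (\<lambda>i. P * a i)" using a by (auto simp: mem_M_lambda supp_below_def)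
  \<comment> \<open>Raising to the power P turns the fractional condition into an integral one.\<close>
  have "real ((P * a i) div t i) = real P * (real (a i) / real (t i))" if "i < n" for i
    using that by (simp add: P_def real_of_nat_div dvd_prodI)
  then have "real (\<Sum>i<n. (P * a i) div t i) = real P * wdeg n t a"
    unfolding wdeg_def by (simp add: sum_distrib_left)
  moreover have "real P \<le> real P * wdeg n t a"
    using a mult_left_mono[of 1 "wdeg n t a" "real P"] by (simp add: mem_M_lambda)
  ultimately have "real P \<le> real (\<Sum>i<n. (P * a i) div t i)" by simp
  then have "P \<le> (\<Sum>i<n. (P * a i) div t i)" by (simp only: of_nat_le_iff)
  then have "monomial a ^ P \<in> ideal_pow (polyring n) J P"
    unfolding monomial_power[OF supp(1)] using monomial_in_ideal_pow[OF gen supp(2)] by blast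
  moreover have "1 \<le> P" using P by simp
  ultimately show ?thesis
    using integral_closure_if_power_mem[OF is_subring_polyring J monomial_in_polyring[OF supp(1)]] by blast
qed

section \<open>The ideal I(lambda) and the monoid M(lambda)\<close>

lemma xpow_lambda_subset_polyring: "{xpow i (lam i) | i. i < n} \<subseteq> (polyring n :: ('k::field) mpoly set)"
  by (auto simp: xpow_eq_monomial intro!: monomial_in_polyring supp_below_fun_upd_zero)

lemma ideal_gen_xpow_lambda_subset_polyring:
  "ideal_gen (polyring n) {xpow i (lam i) | i. i < n} \<subseteq> (polyring n :: ('k::field) mpoly set)"
  by (rule ideal_gen_minimal[OF is_ideal_self[OF is_subring_polyring] xpow_lambda_subset_polyring])

lemma I_lambda_subset_polyring: "I_lambda n lam \<subseteq> polyring n"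
  unfolding I_lambda_def integral_closure_def by blast

lemma xpow_lambda_mem_ideal_gen:
  "i < n \<Longrightarrow> xpow i (lam i) \<in> ideal_gen (polyring n) {xpow i (lam i) :: ('k::field) mpoly | i. i < n}"
  by (intro ideal_gen_superset[OF is_subring_polyring]) blast

lemma xpow_lambda_in_I_lambda:
  assumes "i < n"
  shows "(xpow i (lam i) :: ('k::field) mpoly) \<in> I_lambda n lam"
  using ideal_subset_integral_closure[OF is_subring_polyring ideal_gen_xpow_lambda_subset_polyring]
    xpow_lambda_mem_ideal_gen[OF assms]
  unfolding I_lambda_def by blast

lemma monomial_in_I_lambda:
  assumes "\<forall>i<n. 0 < lam i" and "(a, 1) \<in> M_lambda n lam"
  shows "(monomial a :: ('k::field) mpoly) \<in> I_lambda n lam"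
proof -
  have "xpow i (lam i) \<in> ideal_gen (polyring n) {xpow i (lam i) :: 'k mpoly | i. i < n}" if "i < n" for i
    using xpow_lambda_mem_ideal_gen[OF that] .
  then show ?thesis unfolding I_lambda_def
    using assms by (intro monomial_in_integral_closure[OF ideal_gen_xpow_lambda_subset_polyring]) auto
qed

lemma I_lambda_subset_wdeg_span:
  assumes "\<forall>i<n. 0 < lam i"
  shows "I_lambda n lam \<subseteq> (monomial_span n (\<lambda>a. 1 \<le> wdeg n lam a) :: ('k::field) mpoly set)"
  unfolding I_lambda_def
proof (intro integral_closure_subset_wdeg_span ideal_gen_minimal)
  show "is_ideal (polyring n) (monomial_span n (\<lambda>a. 1 \<le> wdeg n lam a) :: 'k mpoly set)"
    by (rule is_ideal_monomial_span) (simp add: wdeg_add add_increasing wdeg_nonneg)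
  show "{xpow i (lam i) :: 'k mpoly | i. i < n} \<subseteq> monomial_span n (\<lambda>a. 1 \<le> wdeg n lam a)"
  proof clarify
    fix i assume i: "i < n"
    have "1 \<le> wdeg n lam (0(i := lam i))" using assms i by (simp add: wdeg_fun_upd_zero)
    then show "xpow i (lam i) \<in> monomial_span n (\<lambda>a. 1 \<le> wdeg n lam a)"
      by (simp add: xpow_eq_monomial monomial_in_monomial_span_iff[OF supp_below_fun_upd_zero[OF i]])
  qed
qed

lemma madd_Pair: "madd (a, d) (c, e) = (a + c, d + e)"
  unfolding madd_def by (simp add: plus_fun_def)

lemma mzero_eq: "mzero = (0, 0)"
  unfolding mzero_def by (simp add: zero_fun_def)

lemma M_lambda_madd: "(a, d) \<in> M_lambda n lam \<Longrightarrow> (c, e) \<in> M_lambda n lam \<Longrightarrow> (a + c, d + e) \<in> M_lambda n lam"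
  by (auto simp: mem_M_lambda supp_below_add wdeg_add)

lemma M_lambda_degree_zero: "(a, 0) \<in> M_lambda n lam \<longleftrightarrow> supp_below n a"
  by (simp add: mem_M_lambda wdeg_nonneg)

definition splits_off_one :: "nat \<Rightarrow> (nat \<Rightarrow> nat) \<Rightarrow> nat \<Rightarrow> (nat \<Rightarrow> nat) \<Rightarrow> bool" where
  "splits_off_one n lam k a \<longleftrightarrow>
     k = 0 \<or> (\<exists>c\<le>a. (c, 1) \<in> M_lambda n lam \<and> (a - c, k - 1) \<in> M_lambda n lam)"

lemma splits_off_one_add:
  assumes b: "supp_below n b" and a: "splits_off_one n lam k a"
  shows "splits_off_one n lam k (b + a)"
proof (cases "k = 0")
  case False
  then obtain c where c: "c \<le> a" "(c, 1) \<in> M_lambda n lam" "(a - c, k - 1) \<in> M_lambda n lam"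
    using a unfolding splits_off_one_def by blast
  have "(b + (a - c), 0 + (k - 1)) \<in> M_lambda n lam"
    using M_lambda_madd[OF _ c(3)] b M_lambda_degree_zero by blast
  moreover have "b + (a - c) = b + a - c" "c \<le> b + a"
    using c(1) by (auto simp: fun_eq_iff le_fun_def intro: trans_le_add2)
  ultimately have "c \<le> b + a \<and> (c, 1) \<in> M_lambda n lam \<and> (b + a - c, k - 1) \<in> M_lambda n lam"
    using c(2) by simp
  then show ?thesis unfolding splits_off_one_def by blast
qed (simp add: splits_off_one_def)

lemma splits_off_one_Suc:
  assumes a: "supp_below n a" "splits_off_one n lam k a" and c: "(c, 1) \<in> M_lambda n lam"
  shows "splits_off_one n lam (Suc k) (a + c)"
proof (cases "k = 0")
  case True
  have "a + c - c = a" "c \<le> a + c" by (auto simp: fun_eq_iff le_fun_def)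
  moreover have "(a, 0) \<in> M_lambda n lam" using a(1) M_lambda_degree_zero by blast
  ultimately have "c \<le> a + c \<and> (c, 1) \<in> M_lambda n lam \<and> (a + c - c, Suc k - 1) \<in> M_lambda n lam"
    using True c by simp
  then show ?thesis unfolding splits_off_one_def by blast
next
  case False
  then obtain c' where c': "c' \<le> a" "(c', 1) \<in> M_lambda n lam" "(a - c', k - 1) \<in> M_lambda n lam"
    using a(2) unfolding splits_off_one_def by blast
  have "(a - c' + c, (k - 1) + 1) \<in> M_lambda n lam" using M_lambda_madd[OF c'(3) c] .
  moreover have "a - c' + c = a + c - c'" "c' \<le> a + c" "(k - 1) + 1 = Suc k - 1"
    using c'(1) False by (auto simp: fun_eq_iff le_fun_def intro: trans_le_add1)
  ultimately have "c' \<le> a + c \<and> (c', 1) \<in> M_lambda n lam \<and> (a + c - c', Suc k - 1) \<in> M_lambda n lam"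
    using c'(2) by simp
  then show ?thesis unfolding splits_off_one_def by blast
qed

lemma ideal_pow_I_lambda_subset_splits:
  assumes "\<forall>i<n. 0 < lam i"
  shows "ideal_pow (polyring n) (I_lambda n lam) k \<subseteq> (monomial_span n (splits_off_one n lam k) :: ('k::field) mpoly set)"
proof (induction k)
  case 0 then show ?case by (simp add: splits_off_one_def monomial_span_True)
next
  case (Suc k)
  have "is_ideal (polyring n) (monomial_span n (splits_off_one n lam (Suc k)) :: 'k mpoly set)"
    by (rule is_ideal_monomial_span) (rule splits_off_one_add)
  moreover have "x * y \<in> monomial_span n (splits_off_one n lam (Suc k))"
    if x: "x \<in> ideal_pow (polyring n) (I_lambda n lam) k" and y: "y \<in> I_lambda n lam" for x y :: "'k mpoly"
  proof (rule monomial_span_mult[where P = "splits_off_one n lam k" and Q = "\<lambda>a. 1 \<le> wdeg n lam a"])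
    show "x \<in> monomial_span n (splits_off_one n lam k)" using Suc x by blast
    show "y \<in> monomial_span n (\<lambda>a. 1 \<le> wdeg n lam a)" using I_lambda_subset_wdeg_span[OF assms] y by blast
    fix a b assume "supp_below n a" "supp_below n b" "splits_off_one n lam k a" "1 \<le> wdeg n lam b"
    then show "splits_off_one n lam (Suc k) (a + b)" by (intro splits_off_one_Suc) (simp_all add: mem_M_lambda)
  qed
  ultimately show ?case by (rule ideal_pow_Suc_subset)
qed

section \<open>Minimal generators\<close>

lemma single_var_if_not_gen_type34:
  assumes "0 < snd v" "\<not> gen_type3 n v" "\<not> gen_type4 n v" "i < j" "j < n"
  shows "fst v i = 0 \<or> fst v j = 0"
proof (cases "j = n - 1")
  case True
  then show ?thesis using assms unfolding gen_type4_def by auto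
next
  case False
  then have "j < n - 1" using assms(5) by simp
  then show ?thesis using assms unfolding gen_type3_def gen_type4_def by fastforce
qed

lemma M_lambda_single_var_split:
  assumes i: "i < n" and M: "(0(i := e), d) \<in> M_lambda n lam" and d: "2 \<le> d"
  shows "(0(i := lam i), 1) \<in> M_lambda n lam" "(0(i := e - lam i), d - 1) \<in> M_lambda n lam"
    and "madd (0(i := lam i), 1) (0(i := e - lam i), d - 1) = (0(i := e), d)"
proof -
  have ratio: "real d \<le> real e / real (lam i)"
    using M i by (simp add: mem_M_lambda wdeg_fun_upd_zero)
  then have lam: "0 < lam i" "real d * real (lam i) \<le> real e"
    using d by (auto simp: le_divide_eq split: if_splits)
  then have "d * lam i \<le> e" by (simp only: of_nat_mult[symmetric] of_nat_le_iff)
  moreover have "lam i \<le> d * lam i" using d by simp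
  ultimately have le: "lam i \<le> e" by linarith
  show "(0(i := lam i), 1) \<in> M_lambda n lam"
    using lam i by (simp add: mem_M_lambda supp_below_fun_upd_zero wdeg_fun_upd_zero)
  have "real (e - lam i) / real (lam i) = real e / real (lam i) - 1"
    using lam le by (simp add: of_nat_diff diff_divide_distrib)
  moreover have "real (d - 1) = real d - 1" using d by simp
  ultimately show "(0(i := e - lam i), d - 1) \<in> M_lambda n lam"
    using ratio i by (simp add: mem_M_lambda supp_below_fun_upd_zero wdeg_fun_upd_zero)
  show "madd (0(i := lam i), 1) (0(i := e - lam i), d - 1) = (0(i := e), d)"
    using le d by (auto simp: madd_Pair fun_eq_iff)
qed

lemma min_generator_single_var_degree_le1:
  assumes mg: "min_generator n lam (a, d)"
    and single: "\<And>i j. i < j \<Longrightarrow> j < n \<Longrightarrow> a i = 0 \<or> a j = 0"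
  shows "d \<le> 1"
proof (rule ccontr)
  assume "\<not> d \<le> 1"
  then have d: "2 \<le> d" by simp
  have aM: "(a, d) \<in> M_lambda n lam" using mg unfolding min_generator_def by blast
  then have supp: "supp_below n a" and wdeg: "real d \<le> wdeg n lam a" by (simp_all add: mem_M_lambda)
  obtain i where i: "i < n" "a i \<noteq> 0"
  proof (rule ccontr)
    assume "\<not> thesis"
    then have "\<forall>i<n. a i = 0" using that by blast
    then have "wdeg n lam a = 0" unfolding wdeg_def by simp
    then show False using wdeg d by simp
  qed
  have "a j = 0" if "j \<noteq> i" for j
  proof (cases "j < n")
    case True
    then show ?thesis using single[of i j] single[of j i] i that by (cases "i < j") auto
  next
    case False
    then show ?thesis using supp unfolding supp_below_def by simp
  qed
  then have a: "0(i := a i) = a" by (auto simp: fun_eq_iff)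
  note split = M_lambda_single_var_split[OF i(1), of "a i" d lam, unfolded a, OF aM d]
  moreover have "(0(i := lam i), 1::nat) \<noteq> mzero" "(0(i := a i - lam i), d - 1) \<noteq> mzero"
    using d by (auto simp: mzero_eq)
  ultimately show False using mg split(3)[symmetric] unfolding min_generator_def by blast
qed

lemma min_generator_gen_type34:
  assumes mg: "min_generator n lam v" and d: "2 \<le> snd v"
  shows "gen_type3 n v \<or> gen_type4 n v"
proof (rule ccontr)
  assume not34: "\<not> (gen_type3 n v \<or> gen_type4 n v)"
  obtain a d where v: "v = (a, d)" by (cases v)
  have "a i = 0 \<or> a j = 0" if "i < j" "j < n" for i j
    using single_var_if_not_gen_type34[of v n i j] not34 d that unfolding v by simp
  with mg have "d \<le> 1" unfolding v by (rule min_generator_single_var_degree_le1)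
  then show False using d unfolding v by simp
qed

lemma M_lambda_size_pos:
  assumes "(a, d) \<in> M_lambda n lam" "(a, d) \<noteq> mzero"
  shows "0 < sum a {..<n} + d"
proof (cases "d = 0")
  case True
  then obtain i where i: "a i \<noteq> 0" using assms(2) by (auto simp: mzero_eq fun_eq_iff)
  then have "i < n" using assms(1) unfolding mem_M_lambda supp_below_def by (meson not_le)
  then have "a i \<le> sum a {..<n}" by (intro member_le_sum) auto
  then show ?thesis using i by simp
qed simp

lemma madd_commute: "madd u w = madd w u"
  unfolding madd_def by (simp add: add.commute)

lemma splits_off_one_if_min_generators_le1:
  assumes gens: "\<And>v. min_generator n lam v \<Longrightarrow> snd v \<le> 1"
  shows "(a, d) \<in> M_lambda n lam \<Longrightarrow> splits_off_one n lam d a"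
proof (induction "sum a {..<n} + d" arbitrary: a d rule: less_induct)
  case less
  show ?case
  proof (cases "d = 0 \<or> min_generator n lam (a, d)")
    case True
    moreover have "(a - a, 0) \<in> M_lambda n lam" by (simp add: mem_M_lambda supp_below_def wdeg_nonneg)
    ultimately show ?thesis
      using gens[of "(a, d)"] less.prems unfolding splits_off_one_def by (auto simp: le_Suc_eq)
  next
    case False
    then obtain u w where uw: "u \<in> M_lambda n lam" "w \<in> M_lambda n lam" "u \<noteq> mzero" "w \<noteq> mzero"
      "(a, d) = madd u w"
      using less.prems unfolding min_generator_def mzero_eq by auto
    have "1 \<le> d" using False by simp
    obtain a1 d1 a2 d2 where u: "(a1, d1) \<in> M_lambda n lam" "1 \<le> d1"
      and w: "(a2, d2) \<in> M_lambda n lam" "(a2, d2) \<noteq> mzero"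
      and sum: "a = a1 + a2" "d = d1 + d2"
    proof (cases "1 \<le> snd u")
      case True then show ?thesis using that uw by (cases u, cases w) (auto simp: madd_Pair)
    next
      case False
      then have "1 \<le> snd w" using \<open>1 \<le> d\<close> uw(5) by (cases u, cases w) (auto simp: madd_Pair)
      then show ?thesis using that uw madd_commute[of u w] by (cases u, cases w) (auto simp: madd_Pair)
    qed
    have "sum a1 {..<n} + d1 < sum a {..<n} + d"
      using M_lambda_size_pos[OF w] unfolding sum by (simp add: sum.distrib)
    then have "splits_off_one n lam d1 a1" using less.hyps u(1) by blast
    then obtain c where c: "c \<le> a1" "(c, 1) \<in> M_lambda n lam" "(a1 - c, d1 - 1) \<in> M_lambda n lam"
      using u(2) unfolding splits_off_one_def by auto
    have "(a1 - c + a2, d1 - 1 + d2) \<in> M_lambda n lam" using M_lambda_madd[OF c(3) w(1)] .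
    moreover have "a1 - c + a2 = a - c" "d1 - 1 + d2 = d - 1" "c \<le> a"
      using c(1) u(2) unfolding sum by (auto simp: fun_eq_iff le_fun_def intro: trans_le_add1)
    ultimately show ?thesis using c(2) unfolding splits_off_one_def by auto
  qed
qed

lemma monomial_in_ideal_pow_I_lambda:
  assumes pos: "\<forall>i<n. 0 < lam i" and gens: "\<And>v. min_generator n lam v \<Longrightarrow> snd v \<le> 1"
  shows "(a, k) \<in> M_lambda n lam \<Longrightarrow> (monomial a :: ('k::field) mpoly) \<in> ideal_pow (polyring n) (I_lambda n lam) k"
proof (induction k arbitrary: a)
  case 0 then show ?case by (simp add: mem_M_lambda monomial_in_polyring)
next
  case (Suc k)
  obtain c where c: "c \<le> a" "(c, 1) \<in> M_lambda n lam" "(a - c, k) \<in> M_lambda n lam"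
    using splits_off_one_if_min_generators_le1[OF gens Suc.prems] unfolding splits_off_one_def by auto
  have "a - c + c = a" using c(1) by (simp add: le_fun_def fun_eq_iff)
  then have eq: "monomial (a - c) * monomial c = (monomial a :: 'k mpoly)"
    using monomial_mult[of n "a - c" c] c(2,3) by (simp add: mem_M_lambda)
  from ideal_pow_Suc_mult_mem[OF is_subring_polyring Suc.IH[OF c(3)] monomial_in_I_lambda[OF pos c(2)]]
  show ?case unfolding eq .
qed

lemma normal_I_lambda_if_min_generators_le1:
  assumes pos: "\<forall>i<n. 0 < lam i" and gens: "\<And>v. min_generator n lam v \<Longrightarrow> snd v \<le> 1"
  shows "normal_ideal (polyring n) (I_lambda n lam :: ('k::field) mpoly set)"
  unfolding normal_ideal_def
proof (intro allI impI equalityI)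
  fix k :: nat
  let ?Ik = "ideal_pow (polyring n) (I_lambda n lam) k :: 'k mpoly set"
  have ideal: "is_ideal (polyring n) ?Ik"
    using is_ideal_ideal_pow[OF is_subring_polyring I_lambda_subset_polyring] .
  have "?Ik \<subseteq> monomial_span n (\<lambda>a. real k \<le> wdeg n lam a)"
    using ideal_pow_subset_wdeg_span[OF I_lambda_subset_wdeg_span[OF pos], of k] by simp
  then have "integral_closure (polyring n) ?Ik \<subseteq> monomial_span n (\<lambda>a. real k \<le> wdeg n lam a)"
    by (rule integral_closure_subset_wdeg_span)
  moreover have "f \<in> ?Ik" if f: "f \<in> monomial_span n (\<lambda>a. real k \<le> wdeg n lam a)" for f
  proof (rule polyring_sum_of_terms[OF ideal])
    show "f \<in> polyring n" using f by (simp add: monomial_span_def)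
    fix m assume "m \<in> Poly_Mapping.keys f"
    then have "(Poly_Mapping.lookup m, k) \<in> M_lambda n lam"
      using f by (simp add: mem_monomial_span_iff mem_M_lambda)
    from monomial_in_ideal_pow_I_lambda[OF pos gens this] show "monomial (Poly_Mapping.lookup m) \<in> ?Ik" .
  qed
  ultimately show "integral_closure (polyring n) ?Ik \<subseteq> ?Ik" by blast
  show "?Ik \<subseteq> integral_closure (polyring n) ?Ik"
    using ideal by (intro ideal_subset_integral_closure[OF is_subring_polyring]) (simp add: is_ideal_def)
qed

lemma min_generators_le1_if_normal:
  assumes pos: "\<forall>i<n. 0 < lam i"
    and normal: "normal_ideal (polyring n) (I_lambda n lam :: ('k::field) mpoly set)"
    and mg: "min_generator n lam (a, d)"
  shows "d \<le> 1"
proof (rule ccontr)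
  assume "\<not> d \<le> 1"
  then have d: "2 \<le> d" by simp
  let ?Id = "ideal_pow (polyring n) (I_lambda n lam) d :: 'k mpoly set"
  have aM: "supp_below n a" "real d \<le> wdeg n lam a"
    using mg unfolding min_generator_def mem_M_lambda by auto
  \<comment> \<open>x^a is integral over I^d, whose pure powers are x_i^(d lam_i).\<close>
  have gen: "xpow i (d * lam i) \<in> ?Id" if "i < n" for i
  proof -
    have "(\<lambda>j. d * (0(i := lam i)) j) = 0(i := d * lam i)" by (simp add: fun_eq_iff)
    then have eq: "xpow i (lam i) ^ d = (xpow i (d * lam i) :: 'k mpoly)"
      by (simp add: xpow_eq_monomial monomial_power[OF supp_below_fun_upd_zero[OF that]])
    have "xpow i (lam i) \<in> (I_lambda n lam :: 'k mpoly set)" using xpow_lambda_in_I_lambda[OF that] .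
    from power_mem_ideal_pow[OF is_subring_polyring this, of d] show ?thesis unfolding eq .
  qed
  have "wdeg n (\<lambda>i. d * lam i) a = wdeg n lam a / real d"
    unfolding wdeg_def by (simp add: sum_divide_distrib divide_divide_eq_left mult.commute)
  then have "(a, 1) \<in> M_lambda n (\<lambda>i. d * lam i)" using aM d by (simp add: mem_M_lambda le_divide_eq)
  moreover have "?Id \<subseteq> polyring n"
    using is_ideal_ideal_pow[OF is_subring_polyring I_lambda_subset_polyring] unfolding is_ideal_def by blast
  ultimately have "monomial a \<in> integral_closure (polyring n) ?Id"
    using monomial_in_integral_closure[OF _ gen] pos d by simp
  then have "monomial a \<in> ?Id" using normal d unfolding normal_ideal_def by auto
  then have "splits_off_one n lam d a"
    using ideal_pow_I_lambda_subset_splits[OF pos] monomial_in_monomial_span_iff[OF aM(1)] by blast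
  then obtain c where c: "c \<le> a" "(c, 1) \<in> M_lambda n lam" "(a - c, d - 1) \<in> M_lambda n lam"
    using d unfolding splits_off_one_def by auto
  moreover have "(a, d) = madd (c, 1) (a - c, d - 1)"
    using c(1) d by (auto simp: madd_Pair fun_eq_iff le_fun_def)
  moreover have "(c, 1::nat) \<noteq> mzero" "(a - c, d - 1) \<noteq> mzero" using d by (auto simp: mzero_eq)
  ultimately show False using mg unfolding min_generator_def by blast
qed

lemma normal_I_lambda_iff_min_generators_le1:
  assumes "\<forall>i<n. 0 < lam i"
  shows "normal_ideal (polyring n) (I_lambda n lam :: ('k::field) mpoly set) \<longleftrightarrow>
    (\<forall>v. min_generator n lam v \<longrightarrow> snd v \<le> 1)"
proof (intro iffI allI impI)
  fix v assume "normal_ideal (polyring n) (I_lambda n lam :: 'k mpoly set)" "min_generator n lam v"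
  then show "snd v \<le> 1" using min_generators_le1_if_normal[OF assms, of "fst v" "snd v"] by simp
next
  assume "\<forall>v. min_generator n lam v \<longrightarrow> snd v \<le> 1"
  then show "normal_ideal (polyring n) (I_lambda n lam :: 'k mpoly set)"
    by (intro normal_I_lambda_if_min_generators_le1[OF assms]) blast
qed

lemma min_generators_le1_iff_gen_type34:
  "(\<forall>v. min_generator n lam v \<longrightarrow> snd v \<le> 1) \<longleftrightarrow>
    (\<forall>v. min_generator n lam v \<and> (gen_type3 n v \<or> gen_type4 n v) \<longrightarrow> snd v = 1)"
proof (intro iffI allI impI)
  fix v assume le1: "\<forall>v. min_generator n lam v \<longrightarrow> snd v \<le> 1"
    and v: "min_generator n lam v \<and> (gen_type3 n v \<or> gen_type4 n v)"
  have "0 < snd v" using v unfolding gen_type3_def gen_type4_def by blast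
  moreover have "snd v \<le> 1" using le1 v by blast
  ultimately show "snd v = 1" by simp
next
  fix v assume eq1: "\<forall>v. min_generator n lam v \<and> (gen_type3 n v \<or> gen_type4 n v) \<longrightarrow> snd v = 1"
    and mg: "min_generator n lam v"
  show "snd v \<le> 1"
  proof (rule ccontr)
    assume "\<not> snd v \<le> 1"
    then have d: "2 \<le> snd v" by simp
    then have "snd v = 1" using eq1 mg min_generator_gen_type34[OF mg] by blast
    then show False using d by simp
  qed
qed

theorem lemma5p3:
  fixes n :: nat and lam :: "nat \<Rightarrow> nat"
  assumes "n \<ge> 1"
    and "\<forall>i<n. lam i > 0"
  shows "normal_ideal (polyring n) (I_lambda n lam :: ('k::field) mpoly set) \<longleftrightarrow>
    (\<forall>v. min_generator n lam v \<and> (gen_type3 n v \<or> gen_type4 n v) \<longrightarrow> snd v = 1)"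
  using normal_I_lambda_iff_min_generators_le1[OF assms(2)] min_generators_le1_iff_gen_type34 by simp

end
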